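(* Let $T>1$, $N>1$, and fix $K\ge N^2$. Suppose the data points $x_1,\dots,x_N\in\mathbb{R}$ and label vectors $\mathbf{y}_1,\dots,\mathbf{y}_N\in\mathbb{R}^T$ are sampled from a distribution that is absolutely continuous with respect to Lebesgue measure on $\mathbb{R}^N\times\mathbb{R}^{T\times N}$. Then with probability one, the connect-the-dots interpolant $f_{\mathcal{D}}$ of the data is the unique solution of $$\min_{\theta}\ \sum_{k=1}^K\|\mathbf{v}_k\|_2\quad\text{subject to}\quad |w_k|=1\ (k=1,\dots,K),\qquad f_\theta(x_i)=\mathbf{y}_i\ (i=1,\dots,N),$$ where $f_\theta(x)=\sum_{k=1}^K \mathbf{v}_k(w_kx+b_k)_+ + \mathbf{a}x+\mathbf{c}$ with $w_k,b_k\in\mathbb{R}$, $\mathbf{v}_k,\mathbf{a},\mathbf{c}\in\mathbb{R}^T$.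
   Context: $(z)_+=\max\{0,z\}$. A function $f:\mathbb{R}\to\mathbb{R}^T$ is a solution of the problem if $f=f_\theta$ for some optimal $\theta$; uniqueness refers to uniqueness of this function. With probability one the $x_i$ are distinct; relabel so that $x_1<\dots<x_N$. Let $\mathbf{s}_i=\frac{\mathbf{y}_{i+1}-\mathbf{y}_i}{x_{i+1}-x_i}$. The connect-the-dots interpolant $f_{\mathcal{D}}:\mathbb{R}\to\mathbb{R}^T$ is the continuous piecewise linear function which in each coordinate interpolates the data, is linear on each $[x_i,x_{i+1}]$, is linear with slope $\mathbf{s}_1$ on $(-\infty,x_2]$ and linear with slope $\mathbf{s}_{N-1}$ on $[x_{N-1},\infty)$. *)

theory Defs
  imports "HOL-Probability.Probability"
begin

text \<open>Data: points x (indexed by 'n, N = CARD('n)) and labels Y (Y $ i in R^T, T = CARD('t)).\<close>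

type_synonym ('n, 't) data = "(real^'n) \<times> (real^'t::finite^'n)"

definition relu_net ::
  "nat \<Rightarrow> (nat \<Rightarrow> real) \<Rightarrow> (nat \<Rightarrow> real) \<Rightarrow> (nat \<Rightarrow> real^'t::finite) \<Rightarrow> real^'t \<Rightarrow> real^'t
   \<Rightarrow> real \<Rightarrow> real^'t::finite" where
  "relu_net K w b v a c x = (\<Sum>k<K. max 0 (w k * x + b k) *\<^sub>R v k) + x *\<^sub>R a + c"

definition net_cost :: "nat \<Rightarrow> (nat \<Rightarrow> real^'t::finite) \<Rightarrow> real" where
  "net_cost K v = (\<Sum>k<K. norm (v k))"

definition feasible ::
  "nat \<Rightarrow> ('n::finite, 't::finite) data \<Rightarrow> (nat \<Rightarrow> real) \<Rightarrow> (nat \<Rightarrow> real) \<Rightarrow> (nat \<Rightarrow> real^'t::finite)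
   \<Rightarrow> real^'t::finite \<Rightarrow> real^'t \<Rightarrow> bool" where
  "feasible K d w b v a c \<longleftrightarrow>
     (\<forall>k<K. \<bar>w k\<bar> = 1) \<and> (\<forall>i. relu_net K w b v a c (fst d $ i) = snd d $ i)"

definition optimal ::
  "nat \<Rightarrow> ('n::finite, 't::finite) data \<Rightarrow> (nat \<Rightarrow> real) \<Rightarrow> (nat \<Rightarrow> real) \<Rightarrow> (nat \<Rightarrow> real^'t::finite)
   \<Rightarrow> real^'t::finite \<Rightarrow> real^'t \<Rightarrow> bool" where
  "optimal K d w b v a c \<longleftrightarrow> feasible K d w b v a c \<and>
     (\<forall>w' b' v' a' c'. feasible K d w' b' v' a' c' \<longrightarrow> net_cost K v \<le> net_cost K v')"

text \<open>Connect-the-dots interpolant (meaningful when the x_i are distinct and N >= 2).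
  s is the sorted list of data points; the label at point p is Y of the index i with x_i = p.\<close>
definition ctd_label :: "('n::finite, 't::finite) data \<Rightarrow> real \<Rightarrow> real^'t::finite" where
  "ctd_label d p = snd d $ (THE i. fst d $ i = p)"

definition ctd_seg :: "('n::finite, 't::finite) data \<Rightarrow> real \<Rightarrow> real \<Rightarrow> real \<Rightarrow> real^'t::finite" where
  "ctd_seg d p q t = ctd_label d p + ((t - p) / (q - p)) *\<^sub>R (ctd_label d q - ctd_label d p)"

definition ctd_interp :: "('n::finite, 't::finite) data \<Rightarrow> real \<Rightarrow> real^'t::finite" where
  "ctd_interp d t =
    (let s = sorted_list_of_set (range (\<lambda>i. fst d $ i)); n = length s;
         j = (if t < s ! 0 then 0 else (GREATEST j. j < n - 1 \<and> s ! j \<le> t))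
     in ctd_seg d (s ! j) (s ! (j + 1)) t)"

definition ctd_unique_solution :: "nat \<Rightarrow> ('n::finite, 't::finite) data \<Rightarrow> bool" where
  "ctd_unique_solution K d \<longleftrightarrow>
     (\<exists>w b v a c. optimal K d w b v a c \<and> relu_net K w b v a c = ctd_interp d) \<and>
     (\<forall>w b v a c. optimal K d w b v a c \<longrightarrow> relu_net K w b v a c = ctd_interp d)"

end

theory Submission
  imports Defs
begin

text \<open>
  Sort the data points as \<open>p\<^sub>0 < \<dots> < p\<^sub>n\<close> and let \<open>\<Delta>\<^sub>m\<close> be the jump of the slope of the
  connect-the-dots interpolant at the interior point \<open>p\<^sub>m\<close>; the interpolant is a network whose
  units sit at the interior points with output weights \<open>\<Delta>\<^sub>m\<close>, so it costs \<open>\<Sum>\<^sub>m \<parallel>\<Delta>\<^sub>m\<parallel>\<close>.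
  Since \<open>|w\<^sub>k| = 1\<close>, every feasible network is a sum of ramps \<open>(x - r\<^sub>k)\<^sub>+ v\<^sub>k\<close> plus an affine
  function. With \<open>q\<^sub>m = sgn \<Delta>\<^sub>m\<close> (and \<open>q\<^sub>0 = q\<^sub>n = 0\<close>), the linear functional
  \<open>\<Lambda> h = - \<Sum>\<^sub>m \<langle>q\<^sub>m\<^sub>+\<^sub>1 - q\<^sub>m, slope of h on [p\<^sub>m, p\<^sub>m\<^sub>+\<^sub>1]\<rangle>\<close> only sees the values
  at the data points, kills affine functions and sends the ramp at \<open>r\<close> with weight \<open>v\<close> to
  \<open>\<langle>Q r, v\<rangle>\<close>, where \<open>Q\<close> is the piecewise-linear interpolant of the \<open>q\<^sub>m\<close>. Hence every
  interpolating network satisfies \<open>\<Sum>\<^sub>m \<parallel>\<Delta>\<^sub>m\<parallel> = \<Sum>\<^sub>k \<langle>Q r\<^sub>k, v\<^sub>k\<rangle> \<le> \<Sum>\<^sub>k \<parallel>v\<^sub>k\<parallel>\<close>.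
  At equality each active unit sits where \<open>\<parallel>Q\<parallel> = 1\<close>. For generic data no two consecutive
  \<open>\<Delta>\<^sub>m\<close> point in the same direction, so by strict convexity of the Euclidean ball this
  happens only at the interior data points, and a ramp sum with breakpoints at the data points
  that interpolates the data is the interpolant itself. Non-generic data lie in finitely many
  graphs of differentiable functions, a Lebesgue null set.
\<close>

section \<open>Ramp sums\<close>

definition ramp_sum ::
  "'i set \<Rightarrow> ('i \<Rightarrow> real) \<Rightarrow> ('i \<Rightarrow> 'a::real_vector) \<Rightarrow> 'a \<Rightarrow> 'a \<Rightarrow> real \<Rightarrow> 'a" where
  "ramp_sum I r v A B x = (\<Sum>k\<in>I. max 0 (x - r k) *\<^sub>R v k) + x *\<^sub>R A + B"

lemma ramp_sum_diff:
  "ramp_sum I r v A B x - ramp_sum I r v' A' B' x = ramp_sum I r (\<lambda>k. v k - v' k) (A - A') (B - B') x"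
  by (simp add: ramp_sum_def sum_subtractf algebra_simps)

lemma relu_net_eq_ramp_sum:
  assumes "\<forall>k<K. \<bar>w k\<bar> = 1"
  shows "relu_net K w b v a c = ramp_sum {..<K} (\<lambda>k. - b k / w k) v
     (a - (\<Sum>k<K. if w k = -1 then v k else 0)) (c + (\<Sum>k<K. if w k = -1 then b k *\<^sub>R v k else 0))"
proof
  fix x
  have unit: "max 0 (w k * x + b k) *\<^sub>R v k = max 0 (x - - b k / w k) *\<^sub>R v k
      - x *\<^sub>R (if w k = -1 then v k else 0) + (if w k = -1 then b k *\<^sub>R v k else 0)"
    if "k < K" for k
  proof -
    have "w k = 1 \<or> w k = -1" using assms that by (auto simp: abs_if split: if_splits)
    then show ?thesis by (auto simp: max_def algebra_simps)
  qed
  have "(\<Sum>k<K. max 0 (w k * x + b k) *\<^sub>R v k) = (\<Sum>k<K. max 0 (x - - b k / w k) *\<^sub>R v k)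
      - x *\<^sub>R (\<Sum>k<K. if w k = -1 then v k else 0) + (\<Sum>k<K. if w k = -1 then b k *\<^sub>R v k else 0)"
    by (simp add: unit sum.distrib sum_subtractf scaleR_sum_right)
  then show "relu_net K w b v a c x = ramp_sum {..<K} (\<lambda>k. - b k / w k) v
     (a - (\<Sum>k<K. if w k = -1 then v k else 0)) (c + (\<Sum>k<K. if w k = -1 then b k *\<^sub>R v k else 0)) x"
    unfolding relu_net_def ramp_sum_def by (simp add: algebra_simps)
qed

lemma norm_convex_combination_eq_1:
  fixes a b :: "'a::real_inner"
  assumes a: "norm a \<le> 1" and b: "norm b \<le> 1" and t: "0 < t" "t < 1"
    and one: "norm ((1 - t) *\<^sub>R a + t *\<^sub>R b) = 1"
  shows "a = b \<and> norm a = 1"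
proof -
  have "1 \<le> (1 - t) * norm a + t * norm b"
    using norm_triangle_ineq[of "(1 - t) *\<^sub>R a" "t *\<^sub>R b"] one t by simp
  then have "(1 - t) * (1 - norm a) + t * (1 - norm b) \<le> 0" by (simp add: algebra_simps)
  moreover have "0 \<le> (1 - t) * (1 - norm a)" "0 \<le> t * (1 - norm b)" using a b t by simp_all
  ultimately have "(1 - t) * (1 - norm a) = 0" "t * (1 - norm b) = 0" by linarith+
  then have na: "norm a = 1" and nb: "norm b = 1" using t by simp_all
  then have "norm ((1 - t) *\<^sub>R a + t *\<^sub>R b) = norm ((1 - t) *\<^sub>R a) + norm (t *\<^sub>R b)"
    using one t by simp
  then have "norm ((1 - t) *\<^sub>R a) *\<^sub>R (t *\<^sub>R b) = norm (t *\<^sub>R b) *\<^sub>R ((1 - t) *\<^sub>R a)"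
    by (rule norm_triangle_eq[THEN iffD1])
  then have "((1 - t) * t) *\<^sub>R b = ((1 - t) * t) *\<^sub>R a" using t na nb by (simp add: mult.commute)
  then show ?thesis using t na by simp
qed

lemma inner_sgn_self: "inner (sgn x) x = norm x" for x :: "'a::real_inner"
  by (cases "x = 0") (simp_all add: sgn_div_norm power2_norm_eq_inner[symmetric] power2_eq_square)

lemma scaleR_norm_sgn: "norm x *\<^sub>R sgn x = x" for x :: "'a::real_normed_vector"
  by (cases "x = 0") (simp_all add: sgn_div_norm)

lemma sgn_eq_imp_minor_eq:
  fixes a b :: "real^'t::finite"
  assumes "sgn a = sgn b"
  shows "a $ s * b $ t = a $ t * b $ s"
proof -
  have a: "a $ i = norm a * sgn a $ i" for i
  proof -
    have "a $ i = (norm a *\<^sub>R sgn a) $ i" by (simp only: scaleR_norm_sgn)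
    then show ?thesis by simp
  qed
  have b: "b $ i = norm b * sgn a $ i" for i
  proof -
    have "b $ i = (norm b *\<^sub>R sgn b) $ i" by (simp only: scaleR_norm_sgn)
    then show ?thesis using assms by simp
  qed
  show ?thesis by (simp only: a b mult_ac)
qed

section \<open>Interpolation at sorted knots\<close>

text \<open>The knots are \<open>p 0 < \<dots> < p n\<close>: \<open>n\<close> counts segments, not data points.\<close>

locale sorted_knots =
  fixes n :: nat and p :: "nat \<Rightarrow> real" and y :: "nat \<Rightarrow> 'a::real_inner"
  assumes n_pos: "0 < n" and knot_less: "\<And>i j. i < j \<Longrightarrow> j \<le> n \<Longrightarrow> p i < p j"
begin

lemma knot_le: "i \<le> j \<Longrightarrow> j \<le> n \<Longrightarrow> p i \<le> p j"
  using knot_less[of i j] by (cases "i = j") auto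

lemma knot_eq_iff: "i \<le> n \<Longrightarrow> j \<le> n \<Longrightarrow> p i = p j \<longleftrightarrow> i = j"
  using knot_less[of i j] knot_less[of j i] by (cases i j rule: linorder_cases) auto

lemma gap_pos: "m < n \<Longrightarrow> 0 < p (Suc m) - p m"
  using knot_less[of m "Suc m"] by simp

definition divdiff :: "(real \<Rightarrow> 'b::real_vector) \<Rightarrow> nat \<Rightarrow> 'b" where
  "divdiff h m = (h (p (Suc m)) - h (p m)) /\<^sub>R (p (Suc m) - p m)"

definition slope :: "nat \<Rightarrow> 'a" where
  "slope m = (y (Suc m) - y m) /\<^sub>R (p (Suc m) - p m)"

definition kink :: "nat \<Rightarrow> 'a" where
  "kink m = (if 0 < m \<and> m < n then slope m - slope (m - 1) else 0)"

definition interpolant :: "real \<Rightarrow> 'a" where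
  "interpolant = ramp_sum {..n} p kink (slope 0) (y 0 - p 0 *\<^sub>R slope 0)"

definition segment :: "real \<Rightarrow> nat" where
  "segment x = (if x < p 0 then 0 else GREATEST j. j < n \<and> p j \<le> x)"

lemma kink_0 [simp]: "kink 0 = 0"
  by (simp add: kink_def)

lemma kink_last: "n \<le> m \<Longrightarrow> kink m = 0"
  by (simp add: kink_def)

lemma y_Suc: "m < n \<Longrightarrow> y (Suc m) = y m + (p (Suc m) - p m) *\<^sub>R slope m"
  using gap_pos[of m] by (simp add: slope_def)

lemma affine_piece_telescope:
  "j < n \<Longrightarrow>
    y 0 + (x - p 0) *\<^sub>R slope 0 + (\<Sum>m\<in>{1..j}. (x - p m) *\<^sub>R kink m) = y j + (x - p j) *\<^sub>R slope j"
proof (induction j)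
  case (Suc j)
  then have "kink (Suc j) = slope (Suc j) - slope j" by (simp add: kink_def)
  then have "y 0 + (x - p 0) *\<^sub>R slope 0 + (\<Sum>m\<in>{1..Suc j}. (x - p m) *\<^sub>R kink m)
      = y j + (x - p j) *\<^sub>R slope j + (x - p (Suc j)) *\<^sub>R (slope (Suc j) - slope j)"
    using Suc by (simp add: add.assoc)
  also have "\<dots> = y (Suc j) + (x - p (Suc j)) *\<^sub>R slope (Suc j)"
    using Suc.prems y_Suc[of j] by (simp add: algebra_simps)
  finally show ?case .
qed simp

lemma interpolant_eq_piece:
  assumes j: "j < n" and left: "0 < j \<Longrightarrow> p j \<le> x" and right: "Suc j < n \<Longrightarrow> x \<le> p (Suc j)"
  shows "interpolant x = y j + (x - p j) *\<^sub>R slope j"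
proof -
  have right_zero: "max 0 (x - p m) *\<^sub>R kink m = 0" if "m \<le> n" "m \<notin> {1..j}" for m
  proof (cases "0 < m \<and> m < n")
    case True
    with that have "Suc j \<le> m" "Suc j < n" by auto
    then have "x \<le> p m" using True right knot_le[of "Suc j" m] by force
    then show ?thesis by simp
  qed (auto simp: kink_def)
  have left_linear: "max 0 (x - p m) = x - p m" if "m \<in> {1..j}" for m
  proof -
    have "p m \<le> p j" "p j \<le> x" using that j left knot_le[of m j] by auto
    then show ?thesis by simp
  qed
  have "(\<Sum>m\<le>n. max 0 (x - p m) *\<^sub>R kink m) = (\<Sum>m\<in>{1..j}. (x - p m) *\<^sub>R kink m)"
    by (rule sum.mono_neutral_cong_right) (use j right_zero left_linear in auto)
  then show ?thesis
    using affine_piece_telescope[OF j, of x] by (simp add: interpolant_def ramp_sum_def algebra_simps)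
qed

lemma segment_less: "segment x < n"
  and knot_segment_le: "0 < segment x \<Longrightarrow> p (segment x) \<le> x"
  and less_knot_Suc_segment: "Suc (segment x) < n \<Longrightarrow> x < p (Suc (segment x))"
proof -
  define P where "P = (\<lambda>j. j < n \<and> p j \<le> x)"
  have "segment x < n \<and> (0 < segment x \<longrightarrow> p (segment x) \<le> x) \<and>
      (Suc (segment x) < n \<longrightarrow> x < p (Suc (segment x)))"
  proof (cases "x < p 0")
    case True
    then show ?thesis using n_pos knot_le[of 0 1] by (simp add: segment_def)
  next
    case False
    then have "P 0" using n_pos by (simp add: P_def)
    moreover have bound: "P j \<Longrightarrow> j \<le> n" for j by (simp add: P_def)
    ultimately have "P (Greatest P)" and "P j \<Longrightarrow> j \<le> Greatest P" for j
      using GreatestI_nat[of P 0 n] Greatest_le_nat[of P _ n] by blast+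
    moreover have "\<not> P (Suc (Greatest P))" using calculation(2)[of "Suc (Greatest P)"] by auto
    moreover have "segment x = Greatest P" using False by (simp add: segment_def P_def)
    ultimately show ?thesis by (auto simp: P_def not_le)
  qed
  then show "segment x < n" "0 < segment x \<Longrightarrow> p (segment x) \<le> x"
    "Suc (segment x) < n \<Longrightarrow> x < p (Suc (segment x))" by blast+
qed

lemma segment_brackets:
  assumes "p 0 \<le> x" "x \<le> p n"
  shows "p (segment x) \<le> x" "x \<le> p (Suc (segment x))"
proof -
  show "p (segment x) \<le> x"
    using assms knot_segment_le[of x] by (cases "segment x = 0") auto
  have "Suc (segment x) < n \<or> Suc (segment x) = n" using segment_less[of x] by auto
  then show "x \<le> p (Suc (segment x))"
    using assms less_knot_Suc_segment[of x] by auto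
qed

lemma interpolant_eq_segment:
  "interpolant x = y (segment x) + (x - p (segment x)) *\<^sub>R slope (segment x)"
  using segment_less knot_segment_le less_knot_Suc_segment
  by (intro interpolant_eq_piece) (auto intro: less_imp_le)

lemma interpolant_knot: "m \<le> n \<Longrightarrow> interpolant (p m) = y m"
proof (cases "m < n")
  case True
  then show ?thesis using interpolant_eq_piece[of m "p m"] knot_le[of m "Suc m"] by simp
next
  case False
  assume "m \<le> n"
  obtain k where "n = Suc k" using n_pos gr0_implies_Suc by blast
  with False \<open>m \<le> n\<close> have k: "m = Suc k" "k < n" by auto
  then have "interpolant (p m) = y k + (p (Suc k) - p k) *\<^sub>R slope k"
    using interpolant_eq_piece[of k "p m"] knot_le[of k m] by simp
  then show ?thesis using y_Suc[of k] k by simp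
qed

lemma ramp_sum_knot:
  assumes "j \<le> n"
  shows "ramp_sum {..n} p E A B (p j) = (\<Sum>m<j. (p j - p m) *\<^sub>R E m) + p j *\<^sub>R A + B"
proof -
  have "(\<Sum>m\<le>n. max 0 (p j - p m) *\<^sub>R E m) = (\<Sum>m<j. (p j - p m) *\<^sub>R E m)"
    by (rule sum.mono_neutral_cong_right) (use assms knot_le in \<open>auto simp: not_less\<close>)
  then show ?thesis by (simp add: ramp_sum_def)
qed

text \<open>
  The end conditions on \<open>E\<close> cannot be dropped: on the knots, the ramp at \<open>p 0\<close> is affine
  and the ramp at \<open>p n\<close> vanishes.
\<close>

lemma ramp_sum_eq_0_if_zero_at_knots:
  assumes E0: "E 0 = 0" and E_last: "E n = 0"
    and zero: "\<And>j. j \<le> n \<Longrightarrow> ramp_sum {..n} p E A B (p j) = 0"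
  shows "ramp_sum {..n} p E A B x = 0"
proof -
  have B0: "p 0 *\<^sub>R A + B = 0" using zero[of 0] by (simp add: ramp_sum_knot)
  have B1: "p 1 *\<^sub>R A + B = 0" using zero[of 1] n_pos E0 by (simp add: ramp_sum_knot)
  have "(p 1 - p 0) *\<^sub>R A = (p 1 *\<^sub>R A + B) - (p 0 *\<^sub>R A + B)" by (simp add: algebra_simps)
  also have "\<dots> = 0" using B0 B1 by simp
  finally have "(p 1 - p 0) *\<^sub>R A = 0" .
  with gap_pos[OF n_pos] have A: "A = 0" by simp
  with B0 have B: "B = 0" by simp
  have below: "\<forall>m<j. E m = 0" if "j \<le> n" for j
    using that
  proof (induction j)
    case (Suc j)
    then have E_below: "\<forall>m<j. E m = 0" by simp
    then have "(\<Sum>m<j. (p (Suc j) - p m) *\<^sub>R E m) = 0" by simp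
    then have "ramp_sum {..n} p E A B (p (Suc j)) = (p (Suc j) - p j) *\<^sub>R E j"
      using ramp_sum_knot[OF Suc.prems, of E A B] A B by simp
    then have "(p (Suc j) - p j) *\<^sub>R E j = 0" using zero[OF Suc.prems] by simp
    then have "E j = 0" using gap_pos[of j] Suc.prems by simp
    then show ?case using E_below less_Suc_eq by auto
  qed simp
  then have "E m = 0" if "m \<le> n" for m
    using that below[of n] E_last by (cases "m = n") auto
  then show ?thesis using A B by (simp add: ramp_sum_def)
qed

lemma ramp_sum_regroup:
  assumes "finite I" and at_knots: "\<And>k. k \<in> I \<Longrightarrow> v k \<noteq> 0 \<Longrightarrow> r k \<in> p ` {..n}"
  shows "ramp_sum I r v A B = ramp_sum {..n} p (\<lambda>m. \<Sum>k\<in>{k\<in>I. r k = p m}. v k) A B"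
proof
  fix x
  have single: "max 0 (x - r k) *\<^sub>R v k = (\<Sum>m\<le>n. if r k = p m then max 0 (x - p m) *\<^sub>R v k else 0)"
    if k: "k \<in> I" for k
  proof (cases "v k = 0")
    case False
    then obtain m0 where m0: "m0 \<le> n" "r k = p m0" using at_knots[OF k False] by auto
    then have "(\<Sum>m\<le>n. if r k = p m then max 0 (x - p m) *\<^sub>R v k else 0)
        = (\<Sum>m\<le>n. if m = m0 then max 0 (x - r k) *\<^sub>R v k else 0)"
      using knot_eq_iff by (intro sum.cong) auto
    then show ?thesis using m0 by simp
  qed (simp cong: if_cong)
  have "(\<Sum>k\<in>I. max 0 (x - r k) *\<^sub>R v k)
      = (\<Sum>k\<in>I. \<Sum>m\<le>n. if r k = p m then max 0 (x - p m) *\<^sub>R v k else 0)"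
    using single by (rule sum.cong[OF refl])
  also have "\<dots> = (\<Sum>m\<le>n. max 0 (x - p m) *\<^sub>R (\<Sum>k\<in>{k\<in>I. r k = p m}. v k))"
    using assms(1) by (subst sum.swap) (simp add: sum.inter_filter scaleR_sum_right if_distrib cong: if_cong)
  finally show "ramp_sum I r v A B x = ramp_sum {..n} p (\<lambda>m. \<Sum>k\<in>{k\<in>I. r k = p m}. v k) A B x"
    by (simp add: ramp_sum_def)
qed

section \<open>The dual certificate\<close>

text \<open>
  Summation by parts turns \<open>dual_certificate\<close> into the piecewise-linear interpolant of the
  directions \<open>sgn (kink m)\<close> (lemma \<open>dual_certificate_on_segment\<close>); in the form below it is
  exactly what \<open>dual_functional\<close> assigns to a single ramp.
\<close>

definition dual_certificate :: "real \<Rightarrow> 'a" where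
  "dual_certificate r =
     - (\<Sum>m<n. divdiff (\<lambda>x. max 0 (x - r)) m *\<^sub>R (sgn (kink (Suc m)) - sgn (kink m)))"

definition dual_functional :: "(real \<Rightarrow> 'a) \<Rightarrow> real" where
  "dual_functional h = - (\<Sum>m<n. inner (sgn (kink (Suc m)) - sgn (kink m)) (divdiff h m))"

lemma sum_sgn_kink_diff: "(\<Sum>m<n. sgn (kink (Suc m)) - sgn (kink m)) = 0"
  by (simp add: sum_lessThan_telescope[of "\<lambda>m. sgn (kink m)"] kink_last)

lemma dual_functional_cong:
  assumes "\<And>m. m \<le> n \<Longrightarrow> h (p m) = g (p m)"
  shows "dual_functional h = dual_functional g"
proof -
  have "divdiff h m = divdiff g m" if "m < n" for m
    using that assms[of m] assms[of "Suc m"] by (simp add: divdiff_def)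
  then show ?thesis by (simp add: dual_functional_def)
qed

lemma divdiff_ramp_sum:
  assumes "m < n"
  shows "divdiff (ramp_sum I r v A B) m = (\<Sum>k\<in>I. divdiff (\<lambda>x. max 0 (x - r k)) m *\<^sub>R v k) + A"
proof -
  have "ramp_sum I r v A B (p (Suc m)) - ramp_sum I r v A B (p m)
      = (\<Sum>k\<in>I. (max 0 (p (Suc m) - r k) - max 0 (p m - r k)) *\<^sub>R v k) + (p (Suc m) - p m) *\<^sub>R A"
    by (simp add: ramp_sum_def algebra_simps sum_subtractf)
  then show ?thesis
    using gap_pos[OF assms] by (simp add: divdiff_def scaleR_add_right scaleR_sum_right divide_inverse_commute)
qed

lemma dual_functional_ramp_sum:
  "dual_functional (ramp_sum I r v A B) = (\<Sum>k\<in>I. inner (dual_certificate (r k)) (v k))"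
proof -
  let ?\<delta> = "\<lambda>m. sgn (kink (Suc m)) - sgn (kink m)" and ?\<rho> = "\<lambda>m k. divdiff (\<lambda>x. max 0 (x - r k)) m"
  have "dual_functional (ramp_sum I r v A B)
      = - (\<Sum>m<n. (\<Sum>k\<in>I. ?\<rho> m k * inner (?\<delta> m) (v k)) + inner (?\<delta> m) A)"
    unfolding dual_functional_def by (intro arg_cong[where f = uminus] sum.cong refl)
      (simp add: divdiff_ramp_sum inner_add_right inner_sum_right)
  also have "\<dots> = - (\<Sum>k\<in>I. \<Sum>m<n. ?\<rho> m k * inner (?\<delta> m) (v k))"
    by (simp add: sum.distrib inner_sum_left[symmetric] sum_sgn_kink_diff) (rule sum.swap)
  also have "\<dots> = (\<Sum>k\<in>I. inner (dual_certificate (r k)) (v k))"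
    by (simp add: dual_certificate_def inner_sum_left sum_negf)
  finally show ?thesis .
qed

lemma divdiff_ramp_left:
  assumes "m < n" "r \<le> p m"
  shows "divdiff (\<lambda>x. max 0 (x - r)) m = 1"
  using gap_pos[OF assms(1)] assms(2) by (simp add: divdiff_def)

lemma divdiff_ramp_right:
  assumes "m < n" "p (Suc m) \<le> r"
  shows "divdiff (\<lambda>x. max 0 (x - r)) m = 0"
  using gap_pos[OF assms(1)] assms(2) by (simp add: divdiff_def)

lemma dual_certificate_on_segment:
  assumes j: "j < n" and r: "p j \<le> r" "r \<le> p (Suc j)"
  defines "t \<equiv> (p (Suc j) - r) / (p (Suc j) - p j)"
  shows "dual_certificate r = (1 - t) *\<^sub>R sgn (kink (Suc j)) + t *\<^sub>R sgn (kink j)"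
proof -
  let ?q = "\<lambda>m. sgn (kink m)" and ?\<rho> = "\<lambda>m. divdiff (\<lambda>x. max 0 (x - r)) m"
  let ?f = "\<lambda>m. ?\<rho> m *\<^sub>R (?q (Suc m) - ?q m)"
  have "(\<Sum>m<n. ?f m) = (\<Sum>m=0..<j. ?f m) + (\<Sum>m=j..<n. ?f m)"
    using j by (simp add: lessThan_atLeast0 sum.atLeastLessThan_concat)
  also have "(\<Sum>m=j..<n. ?f m) = ?f j + (\<Sum>m=Suc j..<n. ?f m)"
    using j by (rule sum.atLeast_Suc_lessThan)
  also have "(\<Sum>m=0..<j. ?f m) = 0"
  proof (intro sum.neutral ballI)
    fix m assume "m \<in> {0..<j}"
    then have "m < n" "p (Suc m) \<le> r" using j r knot_le[of "Suc m" j] by auto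
    then show "?f m = 0" by (simp add: divdiff_ramp_right)
  qed
  also have "(\<Sum>m=Suc j..<n. ?f m) = (\<Sum>m=Suc j..<n. ?q (Suc m) - ?q m)"
  proof (intro sum.cong refl)
    fix m assume "m \<in> {Suc j..<n}"
    then have "m < n" "r \<le> p m" using r knot_le[of "Suc j" m] by auto
    then show "?f m = ?q (Suc m) - ?q m" by (simp add: divdiff_ramp_left)
  qed
  also have "\<dots> = - ?q (Suc j)"
    using j by (simp add: sum_Suc_diff'[where f = "\<lambda>m. sgn (kink m)"] kink_last)
  also have "?\<rho> j = t"
    using j r by (simp add: divdiff_def t_def divide_inverse_commute)
  finally show ?thesis by (simp add: dual_certificate_def algebra_simps)
qed

lemma dual_certificate_outside: "r \<le> p 0 \<or> p n \<le> r \<Longrightarrow> dual_certificate r = 0"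
proof (elim disjE)
  assume "r \<le> p 0"
  then have "divdiff (\<lambda>x. max 0 (x - r)) m = 1" if "m < n" for m
    using that knot_le[of 0 m] by (intro divdiff_ramp_left) auto
  then show ?thesis by (simp add: dual_certificate_def sum_sgn_kink_diff)
next
  assume "p n \<le> r"
  then have "divdiff (\<lambda>x. max 0 (x - r)) m = 0" if "m < n" for m
    using that knot_le[of "Suc m" n] by (intro divdiff_ramp_right) auto
  then show ?thesis by (simp add: dual_certificate_def)
qed

lemma dual_certificate_knot: "m \<le> n \<Longrightarrow> dual_certificate (p m) = sgn (kink m)"
proof (cases "m < n")
  case True
  then show ?thesis using dual_certificate_on_segment[of m "p m"] knot_le[of m "Suc m"] gap_pos[of m] by simp
next
  case False
  assume "m \<le> n"
  with False have "m = n" by simp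
  then show ?thesis using dual_certificate_outside[of "p m"] kink_last[of m] by simp
qed

lemma norm_dual_certificate_le: "norm (dual_certificate r) \<le> 1"
proof (cases "r \<le> p 0 \<or> p n \<le> r")
  case True
  then show ?thesis by (simp add: dual_certificate_outside)
next
  case False
  define j where "j = segment r"
  have j: "j < n" "p j \<le> r" "r \<le> p (Suc j)"
    using segment_less segment_brackets False by (auto simp: j_def)
  define t where "t = (p (Suc j) - r) / (p (Suc j) - p j)"
  have t: "0 \<le> t" "t \<le> 1" using j gap_pos[OF j(1)] by (auto simp: t_def)
  have "norm (dual_certificate r) \<le> norm ((1 - t) *\<^sub>R sgn (kink (Suc j))) + norm (t *\<^sub>R sgn (kink j))"
    unfolding dual_certificate_on_segment[OF j] t_def[symmetric] by (rule norm_triangle_ineq)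
  also have "\<dots> \<le> (1 - t) * 1 + t * 1"
    using t by (intro add_mono mult_left_mono) (auto simp: norm_sgn)
  finally show ?thesis by simp
qed

lemma inner_dual_certificate_le: "inner (dual_certificate r) v \<le> norm v"
  using norm_cauchy_schwarz[of "dual_certificate r" v] norm_dual_certificate_le[of r]
    mult_right_mono[of "norm (dual_certificate r)" 1 "norm v"] by simp

lemma norm_dual_certificate_eq_1:
  assumes not_parallel: "\<And>m. kink m \<noteq> 0 \<Longrightarrow> kink (Suc m) \<noteq> 0 \<Longrightarrow> sgn (kink m) \<noteq> sgn (kink (Suc m))"
    and one: "norm (dual_certificate r) = 1"
  shows "\<exists>m\<le>n. kink m \<noteq> 0 \<and> r = p m"
proof -
  have at_knot: "kink m \<noteq> 0" if "m \<le> n" "r = p m" for m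
    using one dual_certificate_knot[OF that(1)] that(2) by (auto simp: norm_sgn split: if_splits)
  have inside: "\<not> (r \<le> p 0 \<or> p n \<le> r)" using one dual_certificate_outside[of r] by auto
  define j where "j = segment r"
  have j: "j < n" "p j \<le> r" "r \<le> p (Suc j)"
    using segment_less segment_brackets inside by (auto simp: j_def)
  consider "r = p j" | "r = p (Suc j)" | "p j < r" "r < p (Suc j)" using j by linarith
  then show ?thesis
  proof cases
    case 1
    moreover have "j \<le> n" using j(1) by simp
    ultimately show ?thesis using at_knot[of j] by blast
  next
    case 2
    moreover have "Suc j \<le> n" using j(1) by simp
    ultimately show ?thesis using at_knot[of "Suc j"] by blast
  next
    case 3
    define t where "t = (p (Suc j) - r) / (p (Suc j) - p j)"
    have "0 < t" "t < 1" using 3 by (auto simp: t_def field_simps)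
    then have "sgn (kink (Suc j)) = sgn (kink j) \<and> norm (sgn (kink (Suc j))) = 1"
      using norm_convex_combination_eq_1[of "sgn (kink (Suc j))" "sgn (kink j)" t] one
        dual_certificate_on_segment[OF j] by (simp add: t_def norm_sgn)
    then have "norm (sgn (kink j)) = 1" "norm (sgn (kink (Suc j))) = 1" "sgn (kink j) = sgn (kink (Suc j))"
      by auto
    then have "kink j \<noteq> 0" "kink (Suc j) \<noteq> 0" by (metis norm_zero sgn_zero zero_neq_one)+
    then have False using not_parallel[of j] \<open>sgn (kink j) = sgn (kink (Suc j))\<close> by blast
    then show ?thesis ..
  qed
qed

lemma dual_functional_interpolant: "dual_functional interpolant = (\<Sum>m\<le>n. norm (kink m))"
  by (simp add: interpolant_def dual_functional_ramp_sum dual_certificate_knot inner_sgn_self)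

lemma interpolating_ramp_sum_pairing:
  assumes "\<And>m. m \<le> n \<Longrightarrow> ramp_sum I r v A B (p m) = y m"
  shows "(\<Sum>k\<in>I. inner (dual_certificate (r k)) (v k)) = (\<Sum>m\<le>n. norm (kink m))"
proof -
  have "dual_functional (ramp_sum I r v A B) = dual_functional interpolant"
    using assms interpolant_knot by (intro dual_functional_cong) simp
  then show ?thesis by (simp add: dual_functional_ramp_sum dual_functional_interpolant)
qed

lemma interpolating_ramp_sum_cost_ge:
  assumes "\<And>m. m \<le> n \<Longrightarrow> ramp_sum I r v A B (p m) = y m"
  shows "(\<Sum>m\<le>n. norm (kink m)) \<le> (\<Sum>k\<in>I. norm (v k))"
proof -
  have "(\<Sum>k\<in>I. inner (dual_certificate (r k)) (v k)) \<le> (\<Sum>k\<in>I. norm (v k))"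
    by (intro sum_mono inner_dual_certificate_le)
  then show ?thesis using interpolating_ramp_sum_pairing[OF assms] by simp
qed

lemma tight_ramp_sum_units_at_kinks:
  assumes not_parallel: "\<And>m. kink m \<noteq> 0 \<Longrightarrow> kink (Suc m) \<noteq> 0 \<Longrightarrow> sgn (kink m) \<noteq> sgn (kink (Suc m))"
    and I: "finite I" and interpolates: "\<And>m. m \<le> n \<Longrightarrow> ramp_sum I r v A B (p m) = y m"
    and cost: "(\<Sum>k\<in>I. norm (v k)) \<le> (\<Sum>m\<le>n. norm (kink m))"
    and k: "k \<in> I" "v k \<noteq> 0"
  shows "\<exists>m\<le>n. kink m \<noteq> 0 \<and> r k = p m"
proof -
  have slack_nonneg: "0 \<le> norm (v k) - inner (dual_certificate (r k)) (v k)" for k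
    using inner_dual_certificate_le[of "r k" "v k"] by simp
  have "(\<Sum>k\<in>I. norm (v k) - inner (dual_certificate (r k)) (v k))
      = (\<Sum>k\<in>I. norm (v k)) - (\<Sum>m\<le>n. norm (kink m))"
    by (simp add: sum_subtractf interpolating_ramp_sum_pairing[OF interpolates])
  also have "\<dots> \<le> 0" using cost by simp
  moreover have "0 \<le> (\<Sum>k\<in>I. norm (v k) - inner (dual_certificate (r k)) (v k))"
    by (rule sum_nonneg) (rule slack_nonneg)
  ultimately have "(\<Sum>k\<in>I. norm (v k) - inner (dual_certificate (r k)) (v k)) = 0" by linarith
  then have "norm (v k) = inner (dual_certificate (r k)) (v k)"
    using sum_nonneg_eq_0_iff[OF I, where f = "\<lambda>k. norm (v k) - inner (dual_certificate (r k)) (v k)"]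
      slack_nonneg k(1) by simp
  then have "norm (v k) \<le> norm (dual_certificate (r k)) * norm (v k)"
    using norm_cauchy_schwarz by metis
  then have "norm (dual_certificate (r k)) = 1"
    using norm_dual_certificate_le[of "r k"] k(2) by simp
  then show ?thesis using norm_dual_certificate_eq_1 not_parallel by blast
qed

lemma interpolating_ramp_sum_eq_interpolant:
  assumes not_parallel: "\<And>m. kink m \<noteq> 0 \<Longrightarrow> kink (Suc m) \<noteq> 0 \<Longrightarrow> sgn (kink m) \<noteq> sgn (kink (Suc m))"
    and I: "finite I" and interpolates: "\<And>m. m \<le> n \<Longrightarrow> ramp_sum I r v A B (p m) = y m"
    and cost: "(\<Sum>k\<in>I. norm (v k)) \<le> (\<Sum>m\<le>n. norm (kink m))"
  shows "ramp_sum I r v A B = interpolant"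
proof -
  have at_knot: "\<exists>m\<le>n. kink m \<noteq> 0 \<and> r k = p m" if "k \<in> I" "v k \<noteq> 0" for k
    by (rule tight_ramp_sum_units_at_kinks[OF _ I interpolates cost that]) (rule not_parallel)
  define E where "E m = (\<Sum>k\<in>{k\<in>I. r k = p m}. v k)" for m
  have regroup: "ramp_sum I r v A B = ramp_sum {..n} p E A B"
    unfolding E_def using at_knot by (intro ramp_sum_regroup[OF I]) blast
  have E_end: "E m = 0" if "m = 0 \<or> m = n" for m
  proof -
    have "v k = 0" if k: "k \<in> I" "r k = p m" for k
    proof (rule ccontr)
      assume "v k \<noteq> 0"
      then obtain m' where "m' \<le> n" "kink m' \<noteq> 0" "r k = p m'" using at_knot[OF k(1)] by blast
      moreover have "m \<le> n" using \<open>m = 0 \<or> m = n\<close> by auto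
      ultimately show False using k(2) knot_eq_iff[of m m'] \<open>m = 0 \<or> m = n\<close> kink_last[of n] by auto
    qed
    then show ?thesis by (simp add: E_def)
  qed
  have diff: "ramp_sum I r v A B x - interpolant x
      = ramp_sum {..n} p (\<lambda>m. E m - kink m) (A - slope 0) (B - (y 0 - p 0 *\<^sub>R slope 0)) x" for x
    unfolding regroup interpolant_def by (rule ramp_sum_diff)
  have "ramp_sum {..n} p (\<lambda>m. E m - kink m) (A - slope 0) (B - (y 0 - p 0 *\<^sub>R slope 0)) x = 0" for x
  proof (rule ramp_sum_eq_0_if_zero_at_knots)
    show "E 0 - kink 0 = 0" "E n - kink n = 0" using E_end kink_last[of n] by simp_all
    fix j assume "j \<le> n"
    then show "ramp_sum {..n} p (\<lambda>m. E m - kink m) (A - slope 0) (B - (y 0 - p 0 *\<^sub>R slope 0)) (p j) = 0"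
      using diff[of "p j"] interpolates interpolant_knot by simp
  qed
  then show ?thesis using diff by (simp add: fun_eq_iff)
qed

end

section \<open>Generic data\<close>

definition knot :: "('n::finite, 't::finite) data \<Rightarrow> nat \<Rightarrow> real" where
  "knot d m = sorted_list_of_set (range (\<lambda>i. fst d $ i)) ! m"

definition data_kink :: "('n::finite, 't::finite) data \<Rightarrow> 'n \<Rightarrow> 'n \<Rightarrow> 'n \<Rightarrow> real^'t" where
  "data_kink d i j k =
     (snd d $ k - snd d $ j) /\<^sub>R (fst d $ k - fst d $ j) - (snd d $ j - snd d $ i) /\<^sub>R (fst d $ j - fst d $ i)"

text \<open>Two label coordinates \<open>t1 \<noteq> t2\<close> suffice to tell directions apart: this is where \<open>T > 1\<close> is used.\<close>

definition generic_data :: "'t \<Rightarrow> 't \<Rightarrow> ('n::finite, 't::finite) data \<Rightarrow> bool" where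
  "generic_data t1 t2 d \<longleftrightarrow> inj (\<lambda>i. fst d $ i) \<and>
     (\<forall>i j k l. distinct [i, j, k, l] \<longrightarrow>
        data_kink d i j k $ t1 * data_kink d j k l $ t2 \<noteq> data_kink d i j k $ t2 * data_kink d j k l $ t1)"

locale distinct_data =
  fixes d :: "('n::finite, 't::finite) data" and n :: nat
  assumes inj_data: "inj (\<lambda>i. fst d $ i)" and card_data: "CARD('n) = Suc n" and segments_pos: "0 < n"
begin

lemma card_range_data: "card (range (\<lambda>i. fst d $ i)) = Suc n"
  using card_image[OF inj_data] card_data by simp

lemma length_sorted_data: "length (sorted_list_of_set (range (\<lambda>i. fst d $ i))) = Suc n"
  by (simp add: card_range_data)

lemma knot_strict_mono: "i < j \<Longrightarrow> j \<le> n \<Longrightarrow> knot d i < knot d j"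
  unfolding knot_def using length_sorted_data
  by (intro sorted_wrt_nth_less[OF strict_sorted_list_of_set]) auto

lemma range_data_eq_knots: "range (\<lambda>i. fst d $ i) = knot d ` {..n}"
proof -
  have "range (\<lambda>i. fst d $ i) = set (sorted_list_of_set (range (\<lambda>i. fst d $ i)))" by simp
  also have "\<dots> = knot d ` {..n}"
    unfolding set_conv_nth length_sorted_data by (auto simp: knot_def less_Suc_eq_le)
  finally show ?thesis .
qed

lemma ctd_label_data: "ctd_label d (fst d $ i) = snd d $ i"
proof -
  have "(THE j. fst d $ j = fst d $ i) = i"
    using inj_data by (auto dest: injD)
  then show ?thesis by (simp add: ctd_label_def)
qed

sublocale sorted_knots n "knot d" "\<lambda>m. ctd_label d (knot d m)"
  using segments_pos knot_strict_mono by unfold_locales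

definition knot_index :: "nat \<Rightarrow> 'n" where
  "knot_index m = inv (\<lambda>i. fst d $ i) (knot d m)"

lemma fst_knot_index: "m \<le> n \<Longrightarrow> fst d $ knot_index m = knot d m"
  unfolding knot_index_def by (rule f_inv_into_f) (simp add: range_data_eq_knots)

lemma label_knot: "m \<le> n \<Longrightarrow> ctd_label d (knot d m) = snd d $ knot_index m"
  using ctd_label_data[of "knot_index m"] fst_knot_index by simp

lemma knot_index_eq_iff:
  "i \<le> n \<Longrightarrow> j \<le> n \<Longrightarrow> knot_index i = knot_index j \<longleftrightarrow> i = j"
  using fst_knot_index knot_eq_iff by metis

lemma kink_eq_data_kink:
  assumes "0 < m" "m < n"
  shows "kink m = data_kink d (knot_index (m - 1)) (knot_index m) (knot_index (Suc m))"
  using assms by (simp add: kink_def slope_def data_kink_def label_knot fst_knot_index)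

lemma generic_kinks_not_parallel:
  assumes gen: "generic_data t1 t2 d" and nonzero: "kink m \<noteq> 0" "kink (Suc m) \<noteq> 0"
  shows "sgn (kink m) \<noteq> sgn (kink (Suc m))"
proof
  assume same: "sgn (kink m) = sgn (kink (Suc m))"
  have m: "0 < m" "Suc m < n" using nonzero by (auto simp: kink_def split: if_splits)
  let ?i = knot_index
  have "distinct [?i (m - 1), ?i m, ?i (Suc m), ?i (Suc (Suc m))]"
    using m by (simp add: knot_index_eq_iff, arith)
  then have "data_kink d (?i (m - 1)) (?i m) (?i (Suc m)) $ t1 * data_kink d (?i m) (?i (Suc m)) (?i (Suc (Suc m))) $ t2
      \<noteq> data_kink d (?i (m - 1)) (?i m) (?i (Suc m)) $ t2 * data_kink d (?i m) (?i (Suc m)) (?i (Suc (Suc m))) $ t1"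
    using gen unfolding generic_data_def by blast
  moreover have "kink m = data_kink d (?i (m - 1)) (?i m) (?i (Suc m))"
    "kink (Suc m) = data_kink d (?i m) (?i (Suc m)) (?i (Suc (Suc m)))"
    using m kink_eq_data_kink[of m] kink_eq_data_kink[of "Suc m"] by simp_all
  moreover have "kink m $ t1 * kink (Suc m) $ t2 = kink m $ t2 * kink (Suc m) $ t1"
    using same by (rule sgn_eq_imp_minor_eq)
  ultimately show False by simp
qed

lemma feasible_iff_interpolates:
  "feasible K d w b v a c \<longleftrightarrow>
     (\<forall>k<K. \<bar>w k\<bar> = 1) \<and> (\<forall>m\<le>n. relu_net K w b v a c (knot d m) = ctd_label d (knot d m))"
proof -
  have "(\<forall>i. f (fst d $ i) = snd d $ i) \<longleftrightarrow> (\<forall>x\<in>range (\<lambda>i. fst d $ i). f x = ctd_label d x)"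
    for f :: "real \<Rightarrow> real^'t"
    by (auto simp: ctd_label_data)
  also have "\<dots> f \<longleftrightarrow> (\<forall>m\<le>n. f (knot d m) = ctd_label d (knot d m))" for f :: "real \<Rightarrow> real^'t"
    unfolding range_data_eq_knots by auto
  finally show ?thesis by (simp add: feasible_def)
qed

lemma ctd_interp_eq_interpolant: "ctd_interp d = interpolant"
proof
  fix t
  have "ctd_interp d t = ctd_seg d (knot d (segment t)) (knot d (Suc (segment t))) t"
    by (simp add: ctd_interp_def segment_def knot_def card_range_data Let_def)
  also have "\<dots> = interpolant t"
    by (simp add: ctd_seg_def interpolant_eq_segment slope_def divide_inverse_commute)
  finally show "ctd_interp d t = interpolant t" .
qed

lemma relu_net_kinks:
  assumes "Suc n \<le> K"
  shows "relu_net K (\<lambda>_. 1) (\<lambda>k. - knot d k) kink (slope 0) (ctd_label d (knot d 0) - knot d 0 *\<^sub>R slope 0)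
    = interpolant"
proof -
  have "(\<Sum>k<K. max 0 (x - knot d k) *\<^sub>R kink k) = (\<Sum>k\<le>n. max 0 (x - knot d k) *\<^sub>R kink k)" for x
    using assms by (intro sum.mono_neutral_right) (auto simp: kink_last)
  then show ?thesis by (simp add: relu_net_def interpolant_def ramp_sum_def fun_eq_iff)
qed

lemma net_cost_kinks: "Suc n \<le> K \<Longrightarrow> net_cost K kink = (\<Sum>m\<le>n. norm (kink m))"
  unfolding net_cost_def by (intro sum.mono_neutral_right) (auto simp: kink_last)

lemma feasible_imp_interpolating_ramp_sum:
  assumes "feasible K d w b v a c"
  shows "\<exists>r A B. relu_net K w b v a c = ramp_sum {..<K} r v A B \<and>
    (\<forall>m\<le>n. ramp_sum {..<K} r v A B (knot d m) = ctd_label d (knot d m))"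
proof -
  have w: "\<forall>k<K. \<bar>w k\<bar> = 1"
    and interpolates: "\<forall>m\<le>n. relu_net K w b v a c (knot d m) = ctd_label d (knot d m)"
    using assms by (simp_all add: feasible_iff_interpolates)
  from relu_net_eq_ramp_sum[OF w] obtain r A B where "relu_net K w b v a c = ramp_sum {..<K} r v A B"
    by blast
  with interpolates show ?thesis by auto
qed

lemma feasible_imp_cost_ge:
  assumes "feasible K d w b v a c"
  shows "(\<Sum>m\<le>n. norm (kink m)) \<le> net_cost K v"
proof -
  obtain r A B where "\<forall>m\<le>n. ramp_sum {..<K} r v A B (knot d m) = ctd_label d (knot d m)"
    using feasible_imp_interpolating_ramp_sum[OF assms] by blast
  then show ?thesis unfolding net_cost_def by (intro interpolating_ramp_sum_cost_ge) auto
qed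

lemma optimal_kinks:
  assumes "Suc n \<le> K"
  shows "optimal K d (\<lambda>_. 1) (\<lambda>k. - knot d k) kink (slope 0) (ctd_label d (knot d 0) - knot d 0 *\<^sub>R slope 0)"
  using feasible_imp_cost_ge
  by (simp add: optimal_def feasible_iff_interpolates relu_net_kinks[OF assms] interpolant_knot
      net_cost_kinks[OF assms])

lemma optimal_imp_interpolant:
  assumes K: "Suc n \<le> K" and gen: "generic_data t1 t2 d" and opt: "optimal K d w b v a c"
  shows "relu_net K w b v a c = interpolant"
proof -
  have feasible: "feasible K d w b v a c" and "net_cost K v \<le> net_cost K kink"
    using opt optimal_kinks[OF K] unfolding optimal_def by blast+
  then have cost: "(\<Sum>k<K. norm (v k)) \<le> (\<Sum>m\<le>n. norm (kink m))"
    unfolding net_cost_kinks[OF K] by (simp add: net_cost_def)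
  obtain r A B where relu: "relu_net K w b v a c = ramp_sum {..<K} r v A B"
    and interpolates: "\<forall>m\<le>n. ramp_sum {..<K} r v A B (knot d m) = ctd_label d (knot d m)"
    using feasible_imp_interpolating_ramp_sum[OF feasible] by blast
  show ?thesis unfolding relu
    using interpolates cost generic_kinks_not_parallel[OF gen]
    by (intro interpolating_ramp_sum_eq_interpolant) auto
qed

lemma ctd_unique_solution_if_generic:
  assumes "Suc n \<le> K" and "generic_data t1 t2 d"
  shows "ctd_unique_solution K d"
  unfolding ctd_unique_solution_def ctd_interp_eq_interpolant
  using optimal_kinks[OF assms(1)] relu_net_kinks[OF assms(1)] optimal_imp_interpolant[OF assms]
  by blast

end

section \<open>Non-generic data form a null set\<close>

lemma negligible_UN_finite: "(\<And>x. negligible (S x)) \<Longrightarrow> negligible (\<Union>x::'a::finite. S x)"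
  by (rule negligible_Union) auto

lemma negligible_differentiable_graph:
  fixes g :: "'a::euclidean_space \<Rightarrow> real"
  assumes "e \<noteq> 0"
    and graph: "\<And>z. z \<in> S \<Longrightarrow> \<exists>u. u \<bullet> e = 0 \<and> g differentiable (at u) \<and> z = u + g u *\<^sub>R e"
  shows "negligible S"
proof -
  define U where "U = {u. u \<bullet> e = 0 \<and> g differentiable (at u)}"
  have "negligible {u. e \<bullet> u = 0}" using assms(1) by (intro negligible_hyperplane) simp
  then have "negligible U" by (rule negligible_subset) (auto simp: U_def inner_commute)
  moreover have "(\<lambda>u. u + g u *\<^sub>R e) differentiable_on U"
    by (auto simp: U_def intro!: differentiable_at_imp_differentiable_on differentiable_add
        differentiable_scaleR)
  ultimately have "negligible ((\<lambda>u. u + g u *\<^sub>R e) ` U)"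
    by (rule negligible_differentiable_image_negligible[OF order_refl])
  moreover have "S \<subseteq> (\<lambda>u. u + g u *\<^sub>R e) ` U" using graph by (fastforce simp: U_def)
  ultimately show ?thesis by (rule negligible_subset)
qed

lemma differentiable_fst_nth [derivative_intros]:
  "(\<lambda>z :: (real^'n::finite) \<times> 'b::real_normed_vector. fst z $ i) differentiable F"
  by (intro bounded_linear_imp_differentiable bounded_linear_compose[OF bounded_linear_vec_nth]
      bounded_linear_fst)

lemma differentiable_snd_nth [derivative_intros]:
  "(\<lambda>z :: 'b::real_normed_vector \<times> (real^'t::finite^'n::finite). snd z $ i $ k) differentiable F"
  by (intro bounded_linear_imp_differentiable bounded_linear_compose[OF bounded_linear_vec_nth]
      bounded_linear_compose[OF bounded_linear_vec_nth] bounded_linear_snd)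

definition clear_label :: "'n \<Rightarrow> 't \<Rightarrow> ('n::finite, 't::finite) data \<Rightarrow> ('n, 't) data" where
  "clear_label j t z = (fst z, \<chi> a b. if a = j \<and> b = t then 0 else snd z $ a $ b)"

lemma fst_clear_label [simp]: "fst (clear_label j t z) = fst z"
  and snd_clear_label [simp]: "snd (clear_label j t z) $ a $ b = (if a = j \<and> b = t then 0 else snd z $ a $ b)"
  by (simp_all add: clear_label_def)

lemma negligible_label_graph:
  fixes S :: "('n::finite, 't::finite) data set" and g :: "('n, 't) data \<Rightarrow> real"
  assumes "\<And>z. z \<in> S \<Longrightarrow> snd z $ j $ t = g (clear_label j t z) \<and> g differentiable (at (clear_label j t z))"
  shows "negligible S"
proof (rule negligible_differentiable_graph)
  let ?e = "(0, axis j (axis t 1)) :: ('n, 't) data"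
  show "?e \<noteq> 0" by (simp add: zero_prod_def)
  fix z assume "z \<in> S"
  have "clear_label j t z \<bullet> ?e = 0"
    by (simp add: inner_prod_def inner_axis)
  moreover have "z = clear_label j t z + snd z $ j $ t *\<^sub>R ?e"
    by (simp add: prod_eq_iff vec_eq_iff axis_def)
  ultimately show "\<exists>u. u \<bullet> ?e = 0 \<and> g differentiable (at u) \<and> z = u + g u *\<^sub>R ?e"
    using assms[OF \<open>z \<in> S\<close>] by metis
qed

lemma data_kink_component:
  "data_kink d i j k $ t = (snd d $ k $ t - snd d $ j $ t) / (fst d $ k - fst d $ j)
     - (snd d $ j $ t - snd d $ i $ t) / (fst d $ j - fst d $ i)"
  by (simp add: data_kink_def divide_inverse_commute)

lemma differentiable_data_kink_component [derivative_intros]: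
  "fst z $ j \<noteq> fst z $ i \<Longrightarrow> fst z $ k \<noteq> fst z $ j \<Longrightarrow>
    (\<lambda>d. data_kink d i j k $ t) differentiable (at z)"
  unfolding data_kink_component by (intro derivative_intros) auto

lemma negligible_coincident_points:
  "negligible {d :: ('n::finite, 't::finite) data. i \<noteq> j \<and> fst d $ i = fst d $ j}"
proof (cases "i = j")
  case False
  define a :: "('n, 't) data" where "a = (axis i 1 - axis j 1, 0)"
  have "fst a $ i = 1" using False by (simp add: a_def axis_def)
  then have "a \<noteq> 0" by auto
  then have "negligible {d. a \<bullet> d = 0}" by (intro negligible_hyperplane) auto
  moreover have "a \<bullet> d = fst d $ i - fst d $ j" for d
    by (simp add: a_def inner_prod_def inner_diff_left inner_axis')
  ultimately show ?thesis by (simp add: False)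
qed simp

lemma negligible_flat_triple:
  "negligible {d :: ('n::finite, 't::finite) data. distinct [i, j, k] \<and> inj (\<lambda>i. fst d $ i) \<and> data_kink d i j k $ t = 0}"
proof (cases "distinct [i, j, k]")
  case True
  show ?thesis
  proof (rule negligible_label_graph[where j = k and t = t])
    fix z :: "('n, 't) data"
    let ?g = "\<lambda>z. snd z $ j $ t + (fst z $ k - fst z $ j) * ((snd z $ j $ t - snd z $ i $ t) / (fst z $ j - fst z $ i))"
    assume "z \<in> {d. distinct [i, j, k] \<and> inj (\<lambda>i. fst d $ i) \<and> data_kink d i j k $ t = 0}"
    then have gaps: "fst z $ j - fst z $ i \<noteq> 0" "fst z $ k - fst z $ j \<noteq> 0"
      and flat: "data_kink z i j k $ t = 0"
      using True by (auto dest: injD)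
    have "snd z $ k $ t = ?g z"
      using flat gaps(2) by (simp add: data_kink_component field_simps)
    moreover have "?g differentiable (at (clear_label k t z))"
      by (intro derivative_intros) (use gaps in auto)
    ultimately show "snd z $ k $ t = ?g (clear_label k t z) \<and> ?g differentiable (at (clear_label k t z))"
      using True by simp
  qed
qed (rule negligible_subset[of "{}"], auto)

lemma negligible_parallel_kinks:
  assumes "t1 \<noteq> t2"
  shows "negligible {d :: ('n::finite, 't::finite) data. distinct [i, j, k, l] \<and> inj (\<lambda>i. fst d $ i) \<and>
    data_kink d i j k $ t1 \<noteq> 0 \<and>
    data_kink d i j k $ t1 * data_kink d j k l $ t2 = data_kink d i j k $ t2 * data_kink d j k l $ t1}"
proof (cases "distinct [i, j, k, l]")
  case True
  show ?thesis
  proof (rule negligible_label_graph[where j = l and t = t2])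
    fix z :: "('n, 't) data"
    let ?g = "\<lambda>z. snd z $ k $ t2 + (fst z $ l - fst z $ k) *
      ((snd z $ k $ t2 - snd z $ j $ t2) / (fst z $ k - fst z $ j)
       + data_kink z i j k $ t2 * data_kink z j k l $ t1 / data_kink z i j k $ t1)"
    assume "z \<in> {d. distinct [i, j, k, l] \<and> inj (\<lambda>i. fst d $ i) \<and> data_kink d i j k $ t1 \<noteq> 0 \<and>
      data_kink d i j k $ t1 * data_kink d j k l $ t2 = data_kink d i j k $ t2 * data_kink d j k l $ t1}"
    then have gaps: "fst z $ j - fst z $ i \<noteq> 0" "fst z $ k - fst z $ j \<noteq> 0" "fst z $ l - fst z $ k \<noteq> 0"
      and nonzero: "data_kink z i j k $ t1 \<noteq> 0"
      and minor: "data_kink z i j k $ t1 * data_kink z j k l $ t2 = data_kink z i j k $ t2 * data_kink z j k l $ t1"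
      using True by (auto dest: injD)
    have "data_kink z j k l $ t2 = data_kink z i j k $ t2 * data_kink z j k l $ t1 / data_kink z i j k $ t1"
      using minor nonzero by (simp add: field_simps)
    then have "snd z $ l $ t2 = ?g z"
      using gaps(3) by (simp add: data_kink_component[of z j k l] field_simps)
    moreover have "data_kink (clear_label l t2 z) i j k = data_kink z i j k"
      "data_kink (clear_label l t2 z) j k l $ t1 = data_kink z j k l $ t1"
      using True assms by (simp_all add: data_kink_def vec_eq_iff)
    moreover have "?g differentiable (at (clear_label l t2 z))"
      by (intro derivative_intros) (use gaps nonzero calculation(2) in auto)
    ultimately show "snd z $ l $ t2 = ?g (clear_label l t2 z) \<and> ?g differentiable (at (clear_label l t2 z))"
      using True by simp
  qed
qed (rule negligible_subset[of "{}"], auto)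

lemma negligible_not_generic:
  assumes "t1 \<noteq> t2"
  shows "negligible {d :: ('n::finite, 't::finite) data. \<not> generic_data t1 t2 d}"
proof -
  define A where "A i j = {d :: ('n, 't) data. i \<noteq> j \<and> fst d $ i = fst d $ j}" for i j :: 'n
  define B where "B i j k = {d :: ('n, 't) data. distinct [i, j, k] \<and> inj (\<lambda>i. fst d $ i) \<and>
    data_kink d i j k $ t1 = 0}" for i j k :: 'n
  define C where "C i j k l = {d :: ('n, 't) data. distinct [i, j, k, l] \<and> inj (\<lambda>i. fst d $ i) \<and>
    data_kink d i j k $ t1 \<noteq> 0 \<and>
    data_kink d i j k $ t1 * data_kink d j k l $ t2 = data_kink d i j k $ t2 * data_kink d j k l $ t1}"
    for i j k l :: 'n
  have "negligible ((\<Union>i j. A i j) \<union> (\<Union>i j k. B i j k) \<union> (\<Union>i j k l. C i j k l))"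
    unfolding A_def B_def C_def
    by (intro negligible_Un negligible_UN_finite negligible_coincident_points negligible_flat_triple
        negligible_parallel_kinks assms)
  moreover have "{d. \<not> generic_data t1 t2 d} \<subseteq> (\<Union>i j. A i j) \<union> (\<Union>i j k. B i j k) \<union> (\<Union>i j k l. C i j k l)"
  proof
    fix d :: "('n, 't) data"
    assume "d \<in> {d. \<not> generic_data t1 t2 d}"
    then consider "\<not> inj (\<lambda>i. fst d $ i)"
      | i j k l where "inj (\<lambda>i. fst d $ i)" "distinct [i, j, k, l]"
        "data_kink d i j k $ t1 * data_kink d j k l $ t2 = data_kink d i j k $ t2 * data_kink d j k l $ t1"
      unfolding generic_data_def by blast
    then show "d \<in> (\<Union>i j. A i j) \<union> (\<Union>i j k. B i j k) \<union> (\<Union>i j k l. C i j k l)"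
    proof cases
      case 1
      then obtain i j where "d \<in> A i j" unfolding inj_def A_def by blast
      then show ?thesis by auto
    next
      case (2 i j k l)
      then have "d \<in> B i j k \<or> d \<in> C i j k l" by (auto simp: B_def C_def)
      then show ?thesis by auto
    qed
  qed
  ultimately show ?thesis by (rule negligible_subset)
qed

theorem corollary1:
  fixes P :: "((real^'n) \<times> (real^'t^'n)) measure" and K :: nat
  assumes "CARD('t) > 1" and "CARD('n) > 1" and "K \<ge> CARD('n)^2"
    and "prob_space P" and "sets P = sets lborel"
    and "absolutely_continuous lborel P"
  shows "AE d in P. ctd_unique_solution K d"
proof -
  obtain t1 t2 :: 't where "t1 \<noteq> t2"
    using assms(1) card_le_Suc0_iff_eq[of "UNIV :: 't set"] by auto
  have "CARD('n) \<le> CARD('n)^2" by (simp add: power2_eq_square le_square)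
  with assms(3) have "CARD('n) \<le> K" by linarith
  then have unique: "ctd_unique_solution K d" if "generic_data t1 t2 d" for d :: "('n, 't) data"
    using that assms(2) distinct_data.ctd_unique_solution_if_generic[of d "CARD('n) - 1" K t1 t2]
    by (simp add: distinct_data_def generic_data_def)
  have "AE d in lebesgue. d \<notin> {d :: ('n, 't) data. \<not> generic_data t1 t2 d}"
    using negligible_not_generic[OF \<open>t1 \<noteq> t2\<close>] by (intro AE_not_in) (simp add: negligible_iff_null_sets)
  then have "AE d in lborel. generic_data t1 t2 (d :: ('n, 't) data)" by (simp add: AE_completion_iff)
  then have "AE d in P. generic_data t1 t2 d" by (rule absolutely_continuous_AE[OF assms(5,6)])
  then show ?thesis by (rule eventually_mono) (rule unique)
qed

end
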